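(* Let $a,b,c,d\in\mathbb{R}$ and $w=a\mathbb{I}+bV_{(AB)}+cV_{(AC)}+dV_{(BC)}$ on $(\mathbb{C}^2)^{\otimes3}$. Then $w$ is local-positive if and only if $$a+b\cos^2\theta+c\cos^2\Omega+d\cos^2(\theta-\Omega)\ge0\quad\text{for all }\theta,\Omega\in\mathbb{R}.$$
   Context: $V_{(XY)}$ denotes the operator swapping tensor factors $X$ and $Y$ among the three qubit factors $A,B,C$. An operator $M$ on $(\mathbb{C}^2)^{\otimes3}$ is local-positive if $\langle\psi_1\psi_2\psi_3|M|\psi_1\psi_2\psi_3\rangle\ge0$ for all unit vectors $\psi_1,\psi_2,\psi_3\in\mathbb{C}^2$. *)

theory Defs
  imports Complex_Main "HOL-Library.Complex_Order"
begin

text \<open>Three-qubit space (C^2)^(tensor 3): computational basis indexed by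
  triples (i,j,k) with i,j,k in {0,1} (factors A,B,C). Operators are 8x8
  complex matrices given by their entries.\<close>

type_synonym idx3 = "nat \<times> nat \<times> nat"
type_synonym op3 = "idx3 \<Rightarrow> idx3 \<Rightarrow> complex"

definition basis3 :: "idx3 set" where
  "basis3 = {..<2} \<times> {..<2} \<times> {..<2}"

text \<open>A vector of C^2, given by its coordinates psi 0, psi 1.\<close>
definition unit_qubit :: "(nat \<Rightarrow> complex) \<Rightarrow> bool" where
  "unit_qubit \<psi> \<longleftrightarrow> (cmod (\<psi> 0))\<^sup>2 + (cmod (\<psi> 1))\<^sup>2 = 1"

definition prod_state :: "(nat \<Rightarrow> complex) \<Rightarrow> (nat \<Rightarrow> complex) \<Rightarrow> (nat \<Rightarrow> complex) \<Rightarrow> idx3 \<Rightarrow> complex" where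
  "prod_state \<psi>1 \<psi>2 \<psi>3 = (\<lambda>(i,j,k). \<psi>1 i * \<psi>2 j * \<psi>3 k)"

definition expval :: "op3 \<Rightarrow> (idx3 \<Rightarrow> complex) \<Rightarrow> complex" where
  "expval M v = (\<Sum>x\<in>basis3. \<Sum>y\<in>basis3. cnj (v x) * M x y * v y)"

definition local_positive :: "op3 \<Rightarrow> bool" where
  "local_positive M \<longleftrightarrow>
     (\<forall>\<psi>1 \<psi>2 \<psi>3. unit_qubit \<psi>1 \<and> unit_qubit \<psi>2 \<and> unit_qubit \<psi>3
        \<longrightarrow> expval M (prod_state \<psi>1 \<psi>2 \<psi>3) \<ge> 0)"

definition id3 :: op3 where
  "id3 x y = (if x = y then 1 else 0)"

text \<open>Swap operators: V_AB |i j k> = |j i k>, etc.\<close>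
definition swapAB :: op3 where
  "swapAB x y = (case x of (i',j',k') \<Rightarrow> case y of (i,j,k) \<Rightarrow>
      if i' = j \<and> j' = i \<and> k' = k then 1 else 0)"

definition swapAC :: op3 where
  "swapAC x y = (case x of (i',j',k') \<Rightarrow> case y of (i,j,k) \<Rightarrow>
      if i' = k \<and> j' = j \<and> k' = i then 1 else 0)"

definition swapBC :: op3 where
  "swapBC x y = (case x of (i',j',k') \<Rightarrow> case y of (i,j,k) \<Rightarrow>
      if i' = i \<and> j' = k \<and> k' = j then 1 else 0)"

end

theory Submission
  imports Defs
begin

(* For a product state u (x) v (x) w of unit qubits, the expectation
   of  W = a I + b V_AB + c V_AC + d V_BC  is  a + b p + c q + d r, where
   p = |<u,v>|^2, q = |<u,w>|^2, r = |<v,w>|^2 are the pairwise overlaps.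
   "Only if": real qubits at angles 0, theta, Omega have overlaps cos^2 theta,
   cos^2 Omega and cos^2 (theta - Omega).
   "If": overlaps of unit vectors in C^2 satisfy p, q in [0,1] (Cauchy-Schwarz)
   and, because the 3x3 Gram matrix of three vectors in C^2 is singular,
   (p + q + r - 1)^2 <= 4 p q r.  This confines r to the interval
   [cos^2 (theta + Omega), cos^2 (theta - Omega)] for the angles with
   cos^2 theta = p, cos^2 Omega = q; as the expectation is affine in r it is
   bounded below by its value at an endpoint, which is nonnegative by hypothesis. *)

definition ip :: "(nat \<Rightarrow> complex) \<Rightarrow> (nat \<Rightarrow> complex) \<Rightarrow> complex" where
  "ip u v = cnj (u 0) * v 0 + cnj (u 1) * v 1"

lemma ip_swap: "ip v u = cnj (ip u v)"
  by (simp add: ip_def mult.commute)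

lemma ip_self_unit: "unit_qubit u \<Longrightarrow> ip u u = 1"
proof -
  assume "unit_qubit u"
  hence "complex_of_real ((cmod (u 0))\<^sup>2 + (cmod (u 1))\<^sup>2) = 1"
    by (simp add: unit_qubit_def)
  moreover have "ip u u = complex_of_real ((cmod (u 0))\<^sup>2 + (cmod (u 1))\<^sup>2)"
    by (simp only: ip_def of_real_add complex_norm_square mult.commute)
  ultimately show ?thesis by simp
qed

lemma ip_times_cnj: "ip u v * ip v u = complex_of_real ((cmod (ip u v))\<^sup>2)"
  by (simp only: ip_swap[of v u] complex_norm_square)

lemma lagrange_identity:
  "ip u u * ip v v - ip u v * ip v u = (u 0 * v 1 - u 1 * v 0) * cnj (u 0 * v 1 - u 1 * v 0)"
  unfolding ip_def complex_cnj_diff complex_cnj_mult by algebra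

lemma overlap_le_1:
  assumes "unit_qubit u" "unit_qubit v"
  shows "(cmod (ip u v))\<^sup>2 \<le> 1"
proof -
  define z where "z = u 0 * v 1 - u 1 * v 0"
  have "complex_of_real (1 - (cmod (ip u v))\<^sup>2) = complex_of_real ((cmod z)\<^sup>2)"
    using lagrange_identity[of u v]
    unfolding ip_self_unit[OF assms(1)] ip_self_unit[OF assms(2)] ip_times_cnj z_def[symmetric]
    by (simp only: of_real_diff of_real_1 mult_1_left complex_norm_square)
  hence "1 - (cmod (ip u v))\<^sup>2 = (cmod z)\<^sup>2" by (simp only: of_real_eq_iff)
  thus ?thesis by (metis diff_ge_0_iff_ge zero_le_power2)
qed

text \<open>Three vectors in the two-dimensional space C^2 are linearly dependent,
  so their 3x3 Gram determinant vanishes.\<close>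
lemma gram_determinant_zero:
  "ip u u * ip v v * ip w w + ip u v * ip v w * ip w u + ip u w * ip w v * ip v u
   - ip u u * ip v w * ip w v - ip v v * ip u w * ip w u - ip w w * ip u v * ip v u = 0"
  unfolding ip_def by algebra

text \<open>For unit qubits the vanishing Gram determinant reads
  1 + 2 Re t = p + q + r with t = <u,v><v,w><w,u>, and |t|^2 = p q r.\<close>
lemma overlap_triangle_constraint:
  assumes "unit_qubit u" "unit_qubit v" "unit_qubit w"
  shows "((cmod (ip u v))\<^sup>2 + (cmod (ip u w))\<^sup>2 + (cmod (ip v w))\<^sup>2 - 1)\<^sup>2
     \<le> 4 * (cmod (ip u v))\<^sup>2 * (cmod (ip u w))\<^sup>2 * (cmod (ip v w))\<^sup>2"
proof -
  define t where "t = ip u v * ip v w * ip w u"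
  have "ip u w * ip w v * ip v u = cnj t"
    by (simp add: t_def ip_swap[of v u] ip_swap[of w v] ip_swap[of u w])
  hence "1 + (t + cnj t) - ip u v * ip v u - ip u w * ip w u - ip v w * ip w v = 0"
    using gram_determinant_zero[of u v w]
    unfolding ip_self_unit[OF assms(1)] ip_self_unit[OF assms(2)] ip_self_unit[OF assms(3)] t_def
    by (simp add: algebra_simps)
  hence "complex_of_real (1 + 2 * Re t - (cmod (ip u v))\<^sup>2 - (cmod (ip u w))\<^sup>2 - (cmod (ip v w))\<^sup>2) = 0"
    unfolding ip_times_cnj
    by (simp only: of_real_add of_real_diff of_real_1 complex_add_cnj)
  hence re_t: "2 * Re t = (cmod (ip u v))\<^sup>2 + (cmod (ip u w))\<^sup>2 + (cmod (ip v w))\<^sup>2 - 1"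
    by (subst (asm) of_real_eq_0_iff) linarith
  have "(Re t)\<^sup>2 \<le> (cmod t)\<^sup>2"
    by (simp add: abs_Re_le_cmod power_mono abs_le_square_iff[symmetric])
  also have "(cmod t)\<^sup>2 = (cmod (ip u v))\<^sup>2 * (cmod (ip u w))\<^sup>2 * (cmod (ip v w))\<^sup>2"
    unfolding t_def by (simp add: norm_mult power_mult_distrib ip_swap[of w u] complex_mod_cnj)
  finally show ?thesis
    unfolding re_t[symmetric] by (simp add: power_mult_distrib)
qed

definition swap_combination :: "real \<Rightarrow> real \<Rightarrow> real \<Rightarrow> real \<Rightarrow> op3" where
  "swap_combination a b c d = (\<lambda>x y. complex_of_real a * id3 x y + complex_of_real b * swapAB x y
            + complex_of_real c * swapAC x y + complex_of_real d * swapBC x y)"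

lemma sum_basis3:
  "(\<Sum>x\<in>basis3. f x) = f (0,0,0) + f (0,0,1) + f (0,1,0) + f (0,1,1)
                      + f (1,0,0) + f (1,0,1) + f (1,1,0) + f (1,1,1)"
proof -
  have two: "{..<2::nat} = {0,1}" by auto
  show ?thesis
    unfolding basis3_def two by (simp add: sum.cartesian_product algebra_simps)
qed

lemma expval_swap_combination_ip:
  "expval (swap_combination a b c d) (prod_state u v w)
   = of_real a * ip u u * ip v v * ip w w + of_real b * ip u v * ip v u * ip w w
     + of_real c * ip u w * ip w u * ip v v + of_real d * ip v w * ip w v * ip u u"
  unfolding expval_def sum_basis3
  by (simp add: swap_combination_def prod_state_def id3_def swapAB_def swapAC_def swapBC_def
      ip_def algebra_simps)

lemma expval_swap_combination:
  assumes "unit_qubit u" "unit_qubit v" "unit_qubit w"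
  shows "expval (swap_combination a b c d) (prod_state u v w)
   = complex_of_real (a + b * (cmod (ip u v))\<^sup>2 + c * (cmod (ip u w))\<^sup>2 + d * (cmod (ip v w))\<^sup>2)"
  unfolding expval_swap_combination_ip ip_self_unit[OF assms(1)] ip_self_unit[OF assms(2)]
    ip_self_unit[OF assms(3)] ip_swap[of v u] ip_swap[of w u] ip_swap[of w v]
  by (simp only: of_real_add of_real_mult complex_norm_square mult_1_right mult.assoc)

definition qubit_angle :: "real \<Rightarrow> nat \<Rightarrow> complex" where
  "qubit_angle \<theta> = (\<lambda>i. if i = 0 then complex_of_real (cos \<theta>) else complex_of_real (sin \<theta>))"

lemma unit_qubit_angle: "unit_qubit (qubit_angle \<theta>)"
  by (simp add: unit_qubit_def qubit_angle_def)

lemma ip_qubit_angle: "ip (qubit_angle \<theta>) (qubit_angle \<Omega>) = complex_of_real (cos (\<theta> - \<Omega>))"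
  by (simp add: ip_def qubit_angle_def cos_diff)

lemma angles_for_overlaps:
  fixes p q :: real
  assumes "0 \<le> p" "p \<le> 1" "0 \<le> q" "q \<le> 1"
  obtains \<theta> \<Omega> where "(cos \<theta>)\<^sup>2 = p" "(cos \<Omega>)\<^sup>2 = q"
    "(cos (\<theta> - \<Omega>))\<^sup>2 = p * q + (1 - p) * (1 - q) + 2 * sqrt (p * q * (1 - p) * (1 - q))"
    "(cos (\<theta> - - \<Omega>))\<^sup>2 = p * q + (1 - p) * (1 - q) - 2 * sqrt (p * q * (1 - p) * (1 - q))"
proof -
  define \<theta> where "\<theta> = arccos (sqrt p)"
  define \<Omega> where "\<Omega> = arccos (sqrt q)"
  have "cos (arccos (sqrt x)) = sqrt x" "sin (arccos (sqrt x)) = sqrt (1 - x)"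
    if "0 \<le> x" "x \<le> 1" for x :: real
  proof -
    have "- 1 \<le> sqrt x" using real_sqrt_ge_zero[OF that(1)] by linarith
    moreover have "sqrt x \<le> 1" using that by simp
    ultimately show "cos (arccos (sqrt x)) = sqrt x" "sin (arccos (sqrt x)) = sqrt (1 - x)"
      using that by (simp_all add: sin_arccos)
  qed
  hence cs: "cos \<theta> = sqrt p" "sin \<theta> = sqrt (1 - p)" "cos \<Omega> = sqrt q" "sin \<Omega> = sqrt (1 - q)"
    using assms unfolding \<theta>_def \<Omega>_def by simp_all
  have prod: "cos \<theta> * cos \<Omega> * (sin \<theta> * sin \<Omega>) = sqrt (p * q * (1 - p) * (1 - q))"
    unfolding cs by (simp add: real_sqrt_mult)
  have squares: "(cos \<theta>)\<^sup>2 = p" "(cos \<Omega>)\<^sup>2 = q" "(sin \<theta>)\<^sup>2 = 1 - p" "(sin \<Omega>)\<^sup>2 = 1 - q"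
    unfolding cs using assms by simp_all
  have "(cos (\<theta> - \<Omega>))\<^sup>2 = (cos \<theta>)\<^sup>2 * (cos \<Omega>)\<^sup>2 + (sin \<theta>)\<^sup>2 * (sin \<Omega>)\<^sup>2
      + 2 * (cos \<theta> * cos \<Omega> * (sin \<theta> * sin \<Omega>))"
    "(cos (\<theta> - - \<Omega>))\<^sup>2 = (cos \<theta>)\<^sup>2 * (cos \<Omega>)\<^sup>2 + (sin \<theta>)\<^sup>2 * (sin \<Omega>)\<^sup>2
      - 2 * (cos \<theta> * cos \<Omega> * (sin \<theta> * sin \<Omega>))"
    by (simp_all add: cos_diff cos_add power2_eq_square algebra_simps)
  then show ?thesis
    using squares by (intro that) (simp_all only: prod)
qed

text \<open>The triangle constraint on overlaps confines r to the interval between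
  cos^2 (theta + Omega) and cos^2 (theta - Omega).\<close>
lemma overlap_interval:
  fixes p q r :: real
  assumes "0 \<le> p" "p \<le> 1" "0 \<le> q" "q \<le> 1"
    and "(p + q + r - 1)\<^sup>2 \<le> 4 * p * q * r"
  shows "\<bar>r - p * q - (1 - p) * (1 - q)\<bar> \<le> 2 * sqrt (p * q * (1 - p) * (1 - q))"
proof -
  have "(r - p * q - (1 - p) * (1 - q))\<^sup>2 = (p + q + r - 1)\<^sup>2 - 4 * p * q * r + 4 * (p * q * (1 - p) * (1 - q))"
    by (simp add: power2_eq_square algebra_simps)
  also have "\<dots> \<le> (2 * sqrt (p * q * (1 - p) * (1 - q)))\<^sup>2"
    using assms by (simp add: power_mult_distrib)
  finally show ?thesis
    by (rule power2_le_iff_abs_le[THEN iffD1, rotated]) (simp add: assms(1-4))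
qed

text \<open>Hence a form nonnegative on all angle triples is nonnegative on every
  admissible overlap triple: being affine in r, it is minimised at an endpoint.\<close>
lemma nonneg_on_admissible_overlaps:
  fixes a b c d p q r :: real
  assumes "0 \<le> p" "p \<le> 1" "0 \<le> q" "q \<le> 1"
    and "(p + q + r - 1)\<^sup>2 \<le> 4 * p * q * r"
    and nonneg: "\<forall>\<theta> \<Omega> :: real. a + b * (cos \<theta>)\<^sup>2 + c * (cos \<Omega>)\<^sup>2 + d * (cos (\<theta> - \<Omega>))\<^sup>2 \<ge> 0"
  shows "a + b * p + c * q + d * r \<ge> 0"
proof -
  obtain \<theta> \<Omega> where angles: "(cos \<theta>)\<^sup>2 = p" "(cos \<Omega>)\<^sup>2 = q"
    "(cos (\<theta> - \<Omega>))\<^sup>2 = p * q + (1 - p) * (1 - q) + 2 * sqrt (p * q * (1 - p) * (1 - q))"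
    "(cos (\<theta> - - \<Omega>))\<^sup>2 = p * q + (1 - p) * (1 - q) - 2 * sqrt (p * q * (1 - p) * (1 - q))"
    using angles_for_overlaps assms(1-4) by blast
  have bound: "\<bar>r - p * q - (1 - p) * (1 - q)\<bar> \<le> 2 * sqrt (p * q * (1 - p) * (1 - q))"
    using overlap_interval assms(1-5) by blast
  show ?thesis
  proof (cases "d \<ge> 0")
    case True
    have "d * (cos (\<theta> - - \<Omega>))\<^sup>2 \<le> d * r"
      unfolding angles using True bound by (intro mult_left_mono) auto
    with nonneg[rule_format, of \<theta> "- \<Omega>"] show ?thesis
      using angles(1,2) by simp
  next
    case False
    have "d * (cos (\<theta> - \<Omega>))\<^sup>2 \<le> d * r"
      unfolding angles using False bound by (intro mult_left_mono_neg) auto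
    with nonneg[rule_format, of \<theta> \<Omega>] show ?thesis
      using angles(1,2) by simp
  qed
qed

lemma complex_of_real_nonneg: "(0 \<le> complex_of_real x) \<longleftrightarrow> (0 \<le> x)"
  by (simp add: less_eq_complex_def)

theorem mainTheorem12:
  fixes a b c d :: real
  shows "local_positive (\<lambda>x y. complex_of_real a * id3 x y + complex_of_real b * swapAB x y
            + complex_of_real c * swapAC x y + complex_of_real d * swapBC x y)
         \<longleftrightarrow> (\<forall>\<theta> \<Omega> :: real. a + b * (cos \<theta>)\<^sup>2 + c * (cos \<Omega>)\<^sup>2 + d * (cos (\<theta> - \<Omega>))\<^sup>2 \<ge> 0)"
  (is "local_positive ?W \<longleftrightarrow> ?angles")
proof -
  have expval: "0 \<le> expval ?W (prod_state u v w) \<longleftrightarrow>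
      0 \<le> a + b * (cmod (ip u v))\<^sup>2 + c * (cmod (ip u w))\<^sup>2 + d * (cmod (ip v w))\<^sup>2"
    if "unit_qubit u" "unit_qubit v" "unit_qubit w" for u v w
    using expval_swap_combination[OF that, of a b c d]
    unfolding swap_combination_def by (simp only: complex_of_real_nonneg)
  have "local_positive ?W \<Longrightarrow> ?angles"
  proof (intro allI)
    fix \<theta> \<Omega> :: real
    assume "local_positive ?W"
    hence "0 \<le> expval ?W (prod_state (qubit_angle 0) (qubit_angle \<theta>) (qubit_angle \<Omega>))"
      unfolding local_positive_def using unit_qubit_angle by blast
    thus "a + b * (cos \<theta>)\<^sup>2 + c * (cos \<Omega>)\<^sup>2 + d * (cos (\<theta> - \<Omega>))\<^sup>2 \<ge> 0"
      by (simp add: expval unit_qubit_angle ip_qubit_angle)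
  qed
  moreover have "?angles \<Longrightarrow> local_positive ?W"
    unfolding local_positive_def
    using expval nonneg_on_admissible_overlaps[OF _ overlap_le_1 _ overlap_le_1 overlap_triangle_constraint]
    by simp
  ultimately show ?thesis by blast
qed

end
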